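(* Let $X$ be a real Hilbert space, let $\alpha\in\mathbb{R}\setminus\{0\}$ and $\beta>0$, equip $X\times X\times\mathbb{R}$ with the norm $\|(x,y,\gamma)\|=\sqrt{\|x\|^2+\|y\|^2+\beta^2|\gamma|^2}$, and let $C_\alpha=\{(x,y,\gamma)\in X\times X\times\mathbb{R}:\langle x,y\rangle=\alpha\gamma\}$. Then: (i) $C_\alpha$ is closed; if $X$ is infinite-dimensional, then $C_\alpha$ is not weakly closed, and in fact its weak closure is $X\times X\times\mathbb{R}$. (ii) $C_\alpha$ is prox-regular in $X\times X\times\mathbb{R}$; hence, for every point of $C_\alpha$ there exists a neighborhood on which the projection mapping $P_{C_\alpha}$ is single-valued.
   Context: $P_S(z)=\operatorname{argmin}_{w\in S}\|w-z\|$. A closed set $S$ is prox-regular (in the sense of Poliquin–Rockafellar–Thibault) if at every point of $S$ it is prox-regular, i.e., there exist $\varepsilon,r>0$ such that for all $x\in S$ near the point and all proximal normals $v$ to $S$ at $x$ with $\|v\|<\varepsilon$, one has $\langle v,x'-x\rangle\leq \frac{r}{2}\|x'-x\|^2$ for all $x'\in S$ near the point. *)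

theory Defs
  imports "HOL-Analysis.Analysis"
begin

definition weak_top :: "('v::real_normed_vector) topology" where
  "weak_top = topology_generated_by
     {f -` U | (f :: 'v \<Rightarrow> real) U. bounded_linear f \<and> open U}"

definition ip_beta :: "real \<Rightarrow> ('a::real_inner \<times> 'a \<times> real) \<Rightarrow> ('a \<times> 'a \<times> real) \<Rightarrow> real" where
  "ip_beta \<beta> p q = (case p of (x, y, g) \<Rightarrow> case q of (x', y', g') \<Rightarrow>
       inner x x' + inner y y' + \<beta>\<^sup>2 * g * g')"

definition ipnorm :: "('v \<Rightarrow> 'v \<Rightarrow> real) \<Rightarrow> 'v \<Rightarrow> real" where
  "ipnorm ip z = sqrt (ip z z)"

definition proj :: "('v::real_vector \<Rightarrow> 'v \<Rightarrow> real) \<Rightarrow> 'v set \<Rightarrow> 'v \<Rightarrow> 'v set" where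
  "proj ip S z = {w \<in> S. \<forall>w' \<in> S. ipnorm ip (w - z) \<le> ipnorm ip (w' - z)}"

definition prox_normal :: "('v::real_vector \<Rightarrow> 'v \<Rightarrow> real) \<Rightarrow> 'v set \<Rightarrow> 'v \<Rightarrow> 'v \<Rightarrow> bool" where
  "prox_normal ip S x v \<longleftrightarrow> x \<in> S \<and> (\<exists>t>0. x \<in> proj ip S (x + t *\<^sub>R v))"

definition prox_regular_at :: "('v::real_vector \<Rightarrow> 'v \<Rightarrow> real) \<Rightarrow> 'v set \<Rightarrow> 'v \<Rightarrow> bool" where
  "prox_regular_at ip S a \<longleftrightarrow>
     (\<exists>\<epsilon>>0. \<exists>r>0. \<exists>\<delta>>0. \<forall>x \<in> S. ipnorm ip (x - a) < \<delta> \<longrightarrow>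
        (\<forall>v. prox_normal ip S x v \<and> ipnorm ip v < \<epsilon> \<longrightarrow>
          (\<forall>x' \<in> S. ipnorm ip (x' - a) < \<delta> \<longrightarrow>
             ip v (x' - x) \<le> r / 2 * (ipnorm ip (x' - x))\<^sup>2)))"

definition prox_regular :: "('v::real_normed_vector \<Rightarrow> 'v \<Rightarrow> real) \<Rightarrow> 'v set \<Rightarrow> bool" where
  "prox_regular ip S \<longleftrightarrow> closed S \<and> (\<forall>a \<in> S. prox_regular_at ip S a)"

definition C_set :: "real \<Rightarrow> ('a::real_inner \<times> 'a \<times> real) set" where
  "C_set \<alpha> = {(x, y, g). inner x y = \<alpha> * g}"

end

theory Submission
  imports Defs
begin

text \<open>
  Every weak neighbourhood of a point contains its translate by the common kernel of finitely
  many linear functionals; in infinite dimension this kernel contains some \<open>v \<noteq> 0\<close>, and moving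
  \<open>x\<close> and \<open>y\<close> along \<open>v\<close> reaches \<open>C\<^sub>\<alpha>\<close>.

  Perturbing a point \<open>(x, y, \<gamma>)\<close> of \<open>C\<^sub>\<alpha>\<close> along the lines \<open>(x + h u, y, \<gamma> + h \<langle>u, y\<rangle> / \<alpha>)\<close> and
  \<open>(x, y + h u, \<gamma> + h \<langle>x, u\<rangle> / \<alpha>)\<close>, which stay in \<open>C\<^sub>\<alpha>\<close>, shows that every proximal normal is
  \<open>s (-\<beta>\<^sup>2/\<alpha> y, -\<beta>\<^sup>2/\<alpha> x, 1)\<close>. Pairing it with a difference of two points of \<open>C\<^sub>\<alpha>\<close> gives
  \<open>s \<beta>\<^sup>2/\<alpha> \<langle>x' - x, y' - y\<rangle>\<close>, which is quadratic in the difference: this is prox-regularity.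

  For the projection, a point \<open>z = (x, y, \<gamma>)\<close> close to \<open>C\<^sub>\<alpha>\<close> is written, by the intermediate
  value theorem, as \<open>z = w\<^sub>0 + \<mu> (b, a, -\<alpha>/\<beta>\<^sup>2)\<close> with \<open>w\<^sub>0 = (a, b, \<langle>a, b\<rangle>/\<alpha>) \<in> C\<^sub>\<alpha>\<close> and
  \<open>\<bar>\<mu>\<bar> \<le> 1/2\<close>. Expanding \<open>\<parallel>w - z\<parallel>\<^sup>2\<close> around \<open>w\<^sub>0\<close> for \<open>w \<in> C\<^sub>\<alpha>\<close> gives a quadratic growth bound,
  so \<open>w\<^sub>0\<close> is the unique nearest point.
\<close>

lemma mem_C_set [simp]: "(x, y, g) \<in> C_set \<alpha> \<longleftrightarrow> inner x y = \<alpha> * g"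
  by (simp add: C_set_def)

lemma closed_C_set: "closed (C_set \<alpha> :: ('a::real_inner \<times> 'a \<times> real) set)"
proof -
  have "C_set \<alpha> = {w :: 'a \<times> 'a \<times> real. inner (fst w) (fst (snd w)) = \<alpha> * snd (snd w)}"
    by (auto simp: C_set_def)
  then show ?thesis
    by (simp add: closed_Collect_eq continuous_intros)
qed

lemma ip_beta_self: "ip_beta \<beta> (x, y, g) (x, y, g) = inner x x + inner y y + \<beta>\<^sup>2 * g\<^sup>2"
  by (simp add: ip_beta_def power2_eq_square)

lemma ip_beta_self_nonneg: "0 \<le> ip_beta \<beta> w w"
  by (cases w) (simp add: ip_beta_self)

lemma ipnorm_ip_beta: "ipnorm (ip_beta \<beta>) (x, y, g) = norm (x, y, \<beta> * g)"
  by (simp add: ipnorm_def ip_beta_self norm_Pair power2_norm_eq_inner power_mult_distrib add.assoc)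

lemma ipnorm_ip_beta_sq: "(ipnorm (ip_beta \<beta>) w)\<^sup>2 = ip_beta \<beta> w w"
  by (simp add: ipnorm_def ip_beta_self_nonneg)

lemma mem_proj_iff:
  "w \<in> proj ip S z \<longleftrightarrow> w \<in> S \<and> (\<forall>w' \<in> S. ip (w - z) (w - z) \<le> ip (w' - z) (w' - z))"
  by (simp add: proj_def ipnorm_def)

lemma abs_inner_le_half_sum: "\<bar>inner a b\<bar> \<le> (inner a a + inner b b) / 2"
proof -
  have "0 \<le> inner (a - b) (a - b)" "0 \<le> inner (a + b) (a + b)"
    by simp_all
  then show ?thesis
    by (simp add: inner_diff_left inner_diff_right inner_add_left inner_add_right inner_commute
        abs_le_iff)
qed

lemma linear_le_quadratic_imp_eq_0:
  fixes a b :: real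
  assumes "\<And>h. h * a \<le> h\<^sup>2 * b"
  shows "a = 0"
proof -
  define c where "c = \<bar>b\<bar> + 1"
  have c: "c > 0"
    by (simp add: c_def add_nonneg_pos)
  have "(a / c) * a \<le> (a / c)\<^sup>2 * \<bar>b\<bar>"
    using assms[of "a / c"] by (smt (verit) abs_ge_self mult_left_mono zero_le_power2)
  then have "a\<^sup>2 * c \<le> a\<^sup>2 * \<bar>b\<bar>"
    using c by (simp add: power2_eq_square field_simps)
  then have "a\<^sup>2 \<le> 0"
    by (simp add: c_def algebra_simps)
  then show ?thesis
    by simp
qed

section \<open>The weak topology\<close>

lemma finite_span_plus_common_kernel:
  fixes G :: "('a::real_vector \<Rightarrow> real) set"
  assumes "finite G" "\<forall>g\<in>G. linear g"
  shows "\<exists>B. finite B \<and> (\<forall>v. \<exists>b\<in>span B. \<exists>k. (\<forall>g\<in>G. g k = 0) \<and> v = b + k)"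
  using assms
proof (induction G rule: finite_induct)
  case empty
  show ?case by (rule exI[of _ "{}"]) (auto intro: exI[of _ 0])
next
  case (insert g G)
  then obtain B where B: "finite B" "\<forall>v. \<exists>b\<in>span B. \<exists>k. (\<forall>g\<in>G. g k = 0) \<and> v = b + k"
    by auto
  have lin: "linear h" if "h \<in> insert g G" for h
    using insert.prems that by blast
  show ?case
  proof (cases "\<exists>e. (\<forall>h\<in>G. h e = 0) \<and> g e = 1")
    case True
    then obtain e where e: "\<forall>h\<in>G. h e = 0" "g e = 1" by auto
    have "\<exists>b\<in>span (insert e B). \<exists>k. (\<forall>h\<in>insert g G. h k = 0) \<and> v = b + k" for v
    proof -
      obtain b k where bk: "b \<in> span B" "\<forall>h\<in>G. h k = 0" "v = b + k"
        using B by blast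
      have "b + g k *\<^sub>R e \<in> span (insert e B)"
        by (meson bk(1) span_add span_base span_mono span_scale insertI1 subset_insertI subsetD)
      moreover have "h (k - g k *\<^sub>R e) = 0" if "h \<in> insert g G" for h
        using that lin[OF that] bk(2) e by (auto simp: linear_diff linear_scale)
      ultimately show ?thesis
        by (intro bexI[of _ "b + g k *\<^sub>R e"] exI[of _ "k - g k *\<^sub>R e"]) (auto simp: bk(3))
    qed
    then show ?thesis
      using B(1) by blast
  next
    case False
    have g_kernel: "g k = 0" if "\<forall>h\<in>G. h k = 0" for k
    proof (rule ccontr)
      assume "g k \<noteq> 0"
      then have "(\<forall>h\<in>G. h ((1 / g k) *\<^sub>R k) = 0) \<and> g ((1 / g k) *\<^sub>R k) = 1"
        using that lin by (simp add: linear_scale)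
      with False show False by blast
    qed
    show ?thesis
    proof (intro exI[of _ B] conjI allI)
      fix v
      obtain b k where "b \<in> span B" "\<forall>h\<in>G. h k = 0" "v = b + k"
        using B(2) by blast
      with g_kernel show "\<exists>b\<in>span B. \<exists>k. (\<forall>h\<in>insert g G. h k = 0) \<and> v = b + k"
        by auto
    qed (rule B(1))
  qed
qed

lemma common_kernel_nontrivial:
  fixes G :: "('a::real_vector \<Rightarrow> real) set"
  assumes "finite G" "\<forall>g\<in>G. linear g" "\<nexists>B :: 'a set. finite B \<and> span B = UNIV"
  shows "\<exists>k. k \<noteq> 0 \<and> (\<forall>g\<in>G. g k = 0)"
proof (rule ccontr)
  assume "\<not> ?thesis"
  moreover obtain B where "finite B" "\<forall>v. \<exists>b\<in>span B. \<exists>k. (\<forall>g\<in>G. g k = 0) \<and> v = b + k"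
    using finite_span_plus_common_kernel[OF assms(1,2)] by blast
  ultimately have "finite B \<and> span B = UNIV"
    by (metis UNIV_eq_I add.right_neutral)
  with assms(3) show False by blast
qed

lemma topspace_weak_top [simp]: "topspace weak_top = UNIV"
proof -
  have "(\<lambda>_. 0::real) -` UNIV \<in>
      {f -` U | (f :: 'a::real_normed_vector \<Rightarrow> real) U. bounded_linear f \<and> open U}"
    by (blast intro: bounded_linear_zero)
  then show ?thesis
    by (auto simp: weak_top_def)
qed

lemma openin_weak_top_contains_kernel_translate:
  assumes "openin weak_top W" "p \<in> W"
  shows "\<exists>F. finite F \<and> (\<forall>f\<in>F. linear f) \<and>
    (\<forall>d::'a::real_normed_vector. (\<forall>f\<in>F. f d = (0::real)) \<longrightarrow> p + d \<in> W)"
proof -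
  have "generate_topology_on {f -` U | (f :: 'a \<Rightarrow> real) U. bounded_linear f \<and> open U} W"
    using assms(1) unfolding weak_top_def by (rule openin_topology_generated_by)
  then show ?thesis
    using assms(2)
  proof (induction arbitrary: p rule: generate_topology_on.induct)
    case Empty
    then show ?case by simp
  next
    case (Int a b)
    obtain F1 where F1: "finite F1" "\<forall>f\<in>F1. linear f" "\<forall>d. (\<forall>f\<in>F1. f d = (0::real)) \<longrightarrow> p + d \<in> a"
      using Int.IH(1)[of p] Int.prems by blast
    obtain F2 where F2: "finite F2" "\<forall>f\<in>F2. linear f" "\<forall>d. (\<forall>f\<in>F2. f d = (0::real)) \<longrightarrow> p + d \<in> b"
      using Int.IH(2)[of p] Int.prems by blast
    have "\<forall>d. (\<forall>f\<in>F1 \<union> F2. f d = 0) \<longrightarrow> p + d \<in> a \<inter> b"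
      using F1(3) F2(3) by simp
    with F1(1,2) F2(1,2) show ?case
      by (intro exI[of _ "F1 \<union> F2"]) blast
  next
    case (UN K)
    from UN.prems obtain k where k: "k \<in> K" "p \<in> k"
      by blast
    from UN.IH[OF k] obtain F
      where "finite F" "\<forall>f\<in>F. linear f" "\<forall>d. (\<forall>f\<in>F. f d = (0::real)) \<longrightarrow> p + d \<in> k"
      by blast
    with k(1) show ?case
      by (intro exI[of _ F]) blast
  next
    case (Basis s)
    then obtain f :: "'a \<Rightarrow> real" and U where s: "s = f -` U" and "bounded_linear f"
      by blast
    from \<open>bounded_linear f\<close> have "linear f"
      by (rule bounded_linear.linear)
    then have "p + d \<in> s" if "f d = 0" for d
      using that Basis.prems by (simp add: s linear_add)
    with \<open>linear f\<close> show ?case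
      by (intro exI[of _ "{f}"]) simp
  qed
qed

lemma C_set_meets_shifts:
  fixes v :: "'a::real_inner"
  assumes "v \<noteq> 0"
  shows "\<exists>a b. (x + a *\<^sub>R v, y + b *\<^sub>R v, g) \<in> C_set \<alpha>"
proof -
  define a where "a = (1 - inner x v) / inner v v"
  define b where "b = \<alpha> * g - inner x y - a * inner v y"
  have "inner (x + a *\<^sub>R v) (y + b *\<^sub>R v)
      = inner x y + a * inner v y + b * (inner x v + a * inner v v)"
    by (simp add: inner_add_left inner_add_right algebra_simps inner_commute)
  also have "inner x v + a * inner v v = 1"
    using assms by (simp add: a_def)
  finally show ?thesis
    by (auto simp: b_def)
qed

lemma weak_closure_of_C_set:
  assumes "\<nexists>B :: 'a::real_inner set. finite B \<and> span B = UNIV"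
  shows "weak_top closure_of (C_set \<alpha> :: ('a \<times> 'a \<times> real) set) = UNIV"
proof -
  have "\<exists>w\<in>C_set \<alpha>. w \<in> W" if W: "openin weak_top W" "(x, y, g) \<in> W"
    for W and x y :: 'a and g :: real
  proof -
    obtain F where F: "finite F" "\<forall>f\<in>F. linear f"
      and translate: "\<forall>d. (\<forall>f\<in>F. f d = (0::real)) \<longrightarrow> (x, y, g) + d \<in> W"
      using openin_weak_top_contains_kernel_translate[OF W] by blast
    define G where "G = (\<lambda>f u. f (u, 0, 0)) ` F \<union> (\<lambda>f u. f (0, u, 0)) ` F"
    have emb: "linear (\<lambda>u::'a. (u, 0::'a, 0::real))" "linear (\<lambda>u::'a. (0::'a, u, 0::real))"
      by (auto simp: linear_iff)
    have "linear (\<lambda>u. f (u, 0, 0))" "linear (\<lambda>u. f (0, u, 0))"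
      if "linear f" for f :: "'a \<times> 'a \<times> real \<Rightarrow> real"
      using linear_compose[OF emb(1) that] linear_compose[OF emb(2) that]
      by (simp_all add: o_def)
    then have "\<forall>h\<in>G. linear h"
      using F(2) by (auto simp: G_def)
    moreover have "finite G"
      using F(1) by (simp add: G_def)
    ultimately obtain v where "v \<noteq> 0" and v: "\<forall>h\<in>G. h v = 0"
      using common_kernel_nontrivial assms by blast
    then obtain a b where C: "(x + a *\<^sub>R v, y + b *\<^sub>R v, g) \<in> C_set \<alpha>"
      using C_set_meets_shifts by blast
    have "f (a *\<^sub>R v, b *\<^sub>R v, 0) = 0" if "f \<in> F" for f
    proof -
      have "f (a *\<^sub>R v, b *\<^sub>R v, 0) = f (a *\<^sub>R (v, 0, 0) + b *\<^sub>R (0, v, 0))"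
        by simp
      also have "\<dots> = a * f (v, 0, 0) + b * f (0, v, 0)"
        using F(2) that by (simp only: linear_add linear_scale real_scaleR_def)
      also have "\<dots> = 0"
      proof -
        have "(\<lambda>u. f (u, 0, 0)) \<in> G" "(\<lambda>u. f (0, u, 0)) \<in> G"
          using that by (simp_all add: G_def)
        from this[THEN v[rule_format]] show ?thesis
          by simp
      qed
      finally show ?thesis .
    qed
    with translate have "(x + a *\<^sub>R v, y + b *\<^sub>R v, g) \<in> W"
      by fastforce
    with C show ?thesis by blast
  qed
  then show ?thesis
    by (auto simp: closure_of_def)
qed

lemma not_closedin_weak_C_set:
  assumes "\<alpha> \<noteq> 0" and "\<nexists>B :: 'a::real_inner set. finite B \<and> span B = UNIV"
  shows "\<not> closedin weak_top (C_set \<alpha> :: ('a \<times> 'a \<times> real) set)"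
proof
  assume "closedin weak_top (C_set \<alpha> :: ('a \<times> 'a \<times> real) set)"
  then have "C_set \<alpha> = (UNIV :: ('a \<times> 'a \<times> real) set)"
    using closure_of_closedin weak_closure_of_C_set[OF assms(2)] by metis
  moreover have "(0, 0, 1) \<notin> (C_set \<alpha> :: ('a \<times> 'a \<times> real) set)"
    using assms(1) by simp
  ultimately show False by blast
qed

section \<open>Proximal normals\<close>

lemma prox_normal_orthogonal_line:
  assumes "prox_normal (ip_beta \<beta>) S w v" and "\<And>h. w + h *\<^sub>R d \<in> S"
  shows "ip_beta \<beta> v d = 0"
proof -
  obtain t where "t > 0" and proj: "w \<in> proj (ip_beta \<beta>) S (w + t *\<^sub>R v)"
    using assms(1) by (auto simp: prox_normal_def)
  have expand: "ip_beta \<beta> (h *\<^sub>R d - t *\<^sub>R v) (h *\<^sub>R d - t *\<^sub>R v)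
      = t\<^sup>2 * ip_beta \<beta> v v - h * (2 * t * ip_beta \<beta> v d) + h\<^sup>2 * ip_beta \<beta> d d" for h
    by (cases d; cases v)
      (simp add: ip_beta_def inner_diff_left inner_diff_right inner_commute power2_eq_square
        algebra_simps)
  have "h * (2 * t * ip_beta \<beta> v d) \<le> h\<^sup>2 * ip_beta \<beta> d d" for h
  proof -
    have "ip_beta \<beta> (0 *\<^sub>R d - t *\<^sub>R v) (0 *\<^sub>R d - t *\<^sub>R v)
        \<le> ip_beta \<beta> (h *\<^sub>R d - t *\<^sub>R v) (h *\<^sub>R d - t *\<^sub>R v)"
      using proj assms(2)[of h] by (auto simp: mem_proj_iff)
    then show ?thesis
      unfolding expand by simp
  qed
  then have "2 * t * ip_beta \<beta> v d = 0"
    by (rule linear_le_quadratic_imp_eq_0)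
  with \<open>t > 0\<close> show ?thesis
    by simp
qed

lemma prox_normal_C_set:
  assumes "\<alpha> \<noteq> 0" and pn: "prox_normal (ip_beta \<beta>) (C_set \<alpha>) (x, y, g) (p, q, s)"
  shows "p = - (\<beta>\<^sup>2 * s / \<alpha>) *\<^sub>R y" and "q = - (\<beta>\<^sup>2 * s / \<alpha>) *\<^sub>R x"
proof -
  define c where "c = \<beta>\<^sup>2 * s / \<alpha>"
  have C: "inner x y = \<alpha> * g"
    using pn by (simp add: prox_normal_def)
  have "inner (p + c *\<^sub>R y) u = 0" for u
  proof -
    have "(x, y, g) + h *\<^sub>R (u, 0, inner u y / \<alpha>) \<in> C_set \<alpha>" for h
      using C assms(1) by (simp add: inner_add_left algebra_simps)
    then have "ip_beta \<beta> (p, q, s) (u, 0, inner u y / \<alpha>) = 0"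
      by (rule prox_normal_orthogonal_line[OF pn])
    then show ?thesis
      by (simp add: ip_beta_def c_def inner_add_left inner_commute algebra_simps)
  qed
  from this[of "p + c *\<^sub>R y"] show "p = - c *\<^sub>R y"
    by (simp add: eq_neg_iff_add_eq_0)
  have "inner (q + c *\<^sub>R x) u = 0" for u
  proof -
    have "(x, y, g) + h *\<^sub>R (0, u, inner x u / \<alpha>) \<in> C_set \<alpha>" for h
      using C assms(1) by (simp add: inner_add_right algebra_simps)
    then have "ip_beta \<beta> (p, q, s) (0, u, inner x u / \<alpha>) = 0"
      by (rule prox_normal_orthogonal_line[OF pn])
    then show ?thesis
      by (simp add: ip_beta_def c_def inner_add_left inner_commute algebra_simps)
  qed
  from this[of "q + c *\<^sub>R x"] show "q = - c *\<^sub>R x"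
    by (simp add: eq_neg_iff_add_eq_0)
qed

lemma prox_normal_C_set_le:
  assumes "\<alpha> \<noteq> 0" "\<beta> > 0" and pn: "prox_normal (ip_beta \<beta>) (C_set \<alpha>) w v"
    and "ipnorm (ip_beta \<beta>) v \<le> 1" and "w' \<in> C_set \<alpha>"
  shows "ip_beta \<beta> v (w' - w) \<le> \<beta> / \<bar>\<alpha>\<bar> / 2 * (ipnorm (ip_beta \<beta>) (w' - w))\<^sup>2"
proof -
  obtain x y g where w: "w = (x, y, g)" by (cases w)
  obtain p q s where v: "v = (p, q, s)" by (cases v)
  obtain x' y' g' where w': "w' = (x', y', g')" by (cases w')
  define c where "c = \<beta>\<^sup>2 * s / \<alpha>"
  define dx where "dx = x' - x"
  define dy where "dy = y' - y"
  have C: "inner x y = \<alpha> * g" "inner x' y' = \<alpha> * g'"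
    using pn assms(5) by (simp_all add: w w' prox_normal_def)
  have p: "p = - c *\<^sub>R y" and q: "q = - c *\<^sub>R x"
    using prox_normal_C_set[OF assms(1) pn[unfolded w v]] by (simp_all add: c_def)
  have "\<beta>\<^sup>2 * s * (g' - g) = c * (inner x' y' - inner x y)"
    using assms(1) C by (simp add: c_def field_simps)
  then have "ip_beta \<beta> v (w' - w) = c * inner dx dy"
    by (simp add: ip_beta_def w w' v p q dx_def dy_def inner_diff_left inner_diff_right
        inner_commute algebra_simps power2_eq_square)
  also have "\<dots> \<le> \<beta> / \<bar>\<alpha>\<bar> * ((inner dx dx + inner dy dy) / 2)"
  proof -
    have "(\<beta> * s)\<^sup>2 \<le> (ipnorm (ip_beta \<beta>) v)\<^sup>2"
      by (simp add: ipnorm_ip_beta_sq v ip_beta_self power_mult_distrib)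
    also have "\<dots> \<le> 1"
      using assms(4) by (intro power_le_one) (simp_all add: ipnorm_def ip_beta_self_nonneg)
    finally have "\<bar>\<beta> * s\<bar> \<le> 1"
      by (simp add: abs_square_le_1)
    then have "\<bar>c\<bar> \<le> \<beta> / \<bar>\<alpha>\<bar>"
      using assms(1,2) by (simp add: c_def abs_mult power2_eq_square divide_right_mono mult_left_le)
    then have "\<bar>c\<bar> * \<bar>inner dx dy\<bar> \<le> \<beta> / \<bar>\<alpha>\<bar> * ((inner dx dx + inner dy dy) / 2)"
      using abs_inner_le_half_sum[of dx dy] assms(2) by (intro mult_mono) auto
    then show ?thesis
      by (metis abs_ge_self abs_mult order_trans)
  qed
  also have "\<dots> \<le> \<beta> / \<bar>\<alpha>\<bar> / 2 * (inner dx dx + inner dy dy + \<beta>\<^sup>2 * (g' - g)\<^sup>2)"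
    using assms(2) by (simp add: divide_right_mono mult_left_mono)
  also have "\<dots> = \<beta> / \<bar>\<alpha>\<bar> / 2 * (ipnorm (ip_beta \<beta>) (w' - w))\<^sup>2"
    by (simp add: ipnorm_ip_beta_sq w w' ip_beta_self dx_def dy_def)
  finally show ?thesis .
qed

lemma prox_regular_C_set:
  assumes "\<alpha> \<noteq> 0" "\<beta> > 0"
  shows "prox_regular (ip_beta \<beta>) (C_set \<alpha> :: ('a::real_inner \<times> 'a \<times> real) set)"
  unfolding prox_regular_def prox_regular_at_def
proof (intro conjI closed_C_set ballI)
  let ?r = "\<beta> / \<bar>\<alpha>\<bar>"
  have "?r > 0"
    using assms by simp
  moreover have "\<forall>x\<in>C_set \<alpha>. ipnorm (ip_beta \<beta>) (x - a) < 1 \<longrightarrow>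
      (\<forall>v. prox_normal (ip_beta \<beta>) (C_set \<alpha>) x v \<and> ipnorm (ip_beta \<beta>) v < 1 \<longrightarrow>
        (\<forall>x'\<in>C_set \<alpha>. ipnorm (ip_beta \<beta>) (x' - a) < 1 \<longrightarrow>
          ip_beta \<beta> v (x' - x) \<le> ?r / 2 * (ipnorm (ip_beta \<beta>) (x' - x))\<^sup>2))"
    for a :: "'a \<times> 'a \<times> real"
    using prox_normal_C_set_le[OF assms] by (meson less_imp_le)
  ultimately show "\<exists>\<epsilon>>0. \<exists>r>0. \<exists>\<delta>>0. \<forall>x\<in>C_set \<alpha>. ipnorm (ip_beta \<beta>) (x - a) < \<delta> \<longrightarrow>
      (\<forall>v. prox_normal (ip_beta \<beta>) (C_set \<alpha>) x v \<and> ipnorm (ip_beta \<beta>) v < \<epsilon> \<longrightarrow>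
        (\<forall>x'\<in>C_set \<alpha>. ipnorm (ip_beta \<beta>) (x' - a) < \<delta> \<longrightarrow>
          ip_beta \<beta> v (x' - x) \<le> r / 2 * (ipnorm (ip_beta \<beta>) (x' - x))\<^sup>2))"
    for a :: "'a \<times> 'a \<times> real"
    using zero_less_one by blast
qed

section \<open>The metric projection\<close>

lemma exists_twisted_decomposition:
  fixes x y :: "'a::real_inner"
  assumes "\<bar>inner x y - c\<bar> \<le> \<kappa> / 2"
  shows "\<exists>\<mu> a b. \<bar>\<mu>\<bar> \<le> 1/2 \<and> x = a + \<mu> *\<^sub>R b \<and> y = b + \<mu> *\<^sub>R a \<and> inner a b = c + \<mu> * \<kappa>"
proof -
  \<comment> \<open>For \<open>\<bar>\<mu>\<bar> < 1\<close>, \<open>(X \<mu>, Y \<mu>)\<close> is the unique solution \<open>(a, b)\<close> of \<open>x = a + \<mu> b\<close>, \<open>y = b + \<mu> a\<close>.\<close>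
  define X where "X \<mu> = (1 / (1 - \<mu>\<^sup>2)) *\<^sub>R (x - \<mu> *\<^sub>R y)" for \<mu> :: real
  define Y where "Y \<mu> = (1 / (1 - \<mu>\<^sup>2)) *\<^sub>R (y - \<mu> *\<^sub>R x)" for \<mu> :: real
  define f where "f \<mu> = inner (X \<mu>) (Y \<mu>) - \<mu> * \<kappa> - c" for \<mu>
  have xy: "\<bar>inner x y\<bar> \<le> (inner x x + inner y y) / 2"
    by (rule abs_inner_le_half_sum)
  have "f (1/2) = 20/9 * inner x y - 8/9 * (inner x x + inner y y) - \<kappa> / 2 - c"
    by (simp add: f_def X_def Y_def inner_diff_left inner_diff_right inner_commute algebra_simps
        power2_eq_square)
  then have "f (1/2) \<le> 0"
    using xy assms unfolding abs_le_iff by linarith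
  moreover have "f (-1/2) = 20/9 * inner x y + 8/9 * (inner x x + inner y y) + \<kappa> / 2 - c"
    by (simp add: f_def X_def Y_def inner_diff_left inner_diff_right inner_commute algebra_simps
        power2_eq_square)
  then have "0 \<le> f (-1/2)"
    using xy assms unfolding abs_le_iff by linarith
  moreover have nonzero: "1 - \<mu>\<^sup>2 \<noteq> 0" if "\<bar>\<mu>\<bar> \<le> 1/2" for \<mu> :: real
  proof -
    have "\<mu>\<^sup>2 < 1"
      using that by (simp add: abs_square_less_1)
    then show ?thesis
      by simp
  qed
  then have "continuous_on {-1/2..1/2} f"
    unfolding f_def X_def Y_def by (intro continuous_intros) auto
  ultimately obtain \<mu> where "-1/2 \<le> \<mu>" "\<mu> \<le> 1/2" and root: "f \<mu> = 0"
    using IVT2'[of f "1/2" 0 "-1/2"] by auto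
  then have \<mu>: "\<bar>\<mu>\<bar> \<le> 1/2"
    by simp
  have "X \<mu> + \<mu> *\<^sub>R Y \<mu> = (1 / (1 - \<mu>\<^sup>2)) *\<^sub>R ((x - \<mu> *\<^sub>R y) + \<mu> *\<^sub>R (y - \<mu> *\<^sub>R x))"
    "Y \<mu> + \<mu> *\<^sub>R X \<mu> = (1 / (1 - \<mu>\<^sup>2)) *\<^sub>R ((y - \<mu> *\<^sub>R x) + \<mu> *\<^sub>R (x - \<mu> *\<^sub>R y))"
    by (simp_all add: X_def Y_def scaleR_add_right)
  moreover have "(x - \<mu> *\<^sub>R y) + \<mu> *\<^sub>R (y - \<mu> *\<^sub>R x) = (1 - \<mu>\<^sup>2) *\<^sub>R x"
    "(y - \<mu> *\<^sub>R x) + \<mu> *\<^sub>R (x - \<mu> *\<^sub>R y) = (1 - \<mu>\<^sup>2) *\<^sub>R y"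
    by (simp_all add: algebra_simps power2_eq_square)
  ultimately have "x = X \<mu> + \<mu> *\<^sub>R Y \<mu>" "y = Y \<mu> + \<mu> *\<^sub>R X \<mu>"
    using nonzero[OF \<mu>] by simp_all
  moreover have "inner (X \<mu>) (Y \<mu>) = c + \<mu> * \<kappa>"
    using root by (simp add: f_def)
  ultimately show ?thesis
    using \<mu> by blast
qed

lemma C_set_quadratic_growth:
  fixes a b x y x' y' :: "'a::real_inner"
  assumes "\<alpha> \<noteq> 0" "\<beta> \<noteq> 0" "\<bar>\<mu>\<bar> \<le> 1/2"
    and x: "x = a + \<mu> *\<^sub>R b" and y: "y = b + \<mu> *\<^sub>R a"
    and ab: "inner a b = \<alpha> * g + \<mu> * (\<alpha>\<^sup>2 / \<beta>\<^sup>2)"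
    and C: "inner x' y' = \<alpha> * g'"
  shows "ip_beta \<beta> ((a, b, inner a b / \<alpha>) - (x, y, g)) ((a, b, inner a b / \<alpha>) - (x, y, g))
      + (inner (x' - a) (x' - a) + inner (y' - b) (y' - b)) / 2
    \<le> ip_beta \<beta> ((x', y', g') - (x, y, g)) ((x', y', g') - (x, y, g))"
proof -
  define \<kappa> where "\<kappa> = \<alpha>\<^sup>2 / \<beta>\<^sup>2"
  have "\<kappa> > 0"
    using assms(1,2) by (simp add: \<kappa>_def)
  define dx where "dx = x' - a"
  define dy where "dy = y' - b"
  define L where "L = inner dx b + inner a dy + inner dx dy"
  have "\<alpha> * (g' - g) = \<mu> * \<kappa> + L"
    using ab C
    by (simp add: \<kappa>_def L_def dx_def dy_def algebra_simps inner_diff_left inner_diff_right)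
  then have "g' - g = (\<mu> * \<kappa> + L) / \<alpha>"
    using assms(1) by (simp add: field_simps)
  then have "\<beta>\<^sup>2 * (g' - g)\<^sup>2 = (\<mu> * \<kappa> + L)\<^sup>2 / \<kappa>"
    using assms(1,2) by (simp add: \<kappa>_def power_divide)
  also have "\<dots> = \<mu>\<^sup>2 * \<kappa> + 2 * \<mu> * L + L\<^sup>2 / \<kappa>"
    using \<open>\<kappa> > 0\<close> by (simp add: power2_eq_square field_simps)
  finally have g': "\<beta>\<^sup>2 * (g' - g)\<^sup>2 = \<mu>\<^sup>2 * \<kappa> + 2 * \<mu> * L + L\<^sup>2 / \<kappa>" .
  have g0: "\<beta>\<^sup>2 * (inner a b / \<alpha> - g)\<^sup>2 = \<mu>\<^sup>2 * \<kappa>"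
    using assms(1,2) by (simp add: ab \<kappa>_def field_simps power2_eq_square)
  have "x' - x = dx - \<mu> *\<^sub>R b" "y' - y = dy - \<mu> *\<^sub>R a"
    by (simp_all add: x y dx_def dy_def)
  then have "ip_beta \<beta> ((x', y', g') - (x, y, g)) ((x', y', g') - (x, y, g))
      = inner (dx - \<mu> *\<^sub>R b) (dx - \<mu> *\<^sub>R b) + inner (dy - \<mu> *\<^sub>R a) (dy - \<mu> *\<^sub>R a)
        + (\<mu>\<^sup>2 * \<kappa> + 2 * \<mu> * L + L\<^sup>2 / \<kappa>)"
    by (simp add: ip_beta_self g')
  also have "\<dots> = \<mu>\<^sup>2 * inner b b + \<mu>\<^sup>2 * inner a a + \<mu>\<^sup>2 * \<kappa>
        + inner dx dx + inner dy dy + 2 * \<mu> * inner dx dy + L\<^sup>2 / \<kappa>"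
    by (simp add: L_def inner_diff_left inner_diff_right inner_commute algebra_simps
        power2_eq_square)
  also have "\<mu>\<^sup>2 * inner b b + \<mu>\<^sup>2 * inner a a + \<mu>\<^sup>2 * \<kappa>
      = ip_beta \<beta> ((a, b, inner a b / \<alpha>) - (x, y, g)) ((a, b, inner a b / \<alpha>) - (x, y, g))"
    by (simp add: ip_beta_self g0 x y) (simp add: power2_eq_square)
  finally have "ip_beta \<beta> ((x', y', g') - (x, y, g)) ((x', y', g') - (x, y, g))
      = ip_beta \<beta> ((a, b, inner a b / \<alpha>) - (x, y, g)) ((a, b, inner a b / \<alpha>) - (x, y, g))
        + inner dx dx + inner dy dy + 2 * \<mu> * inner dx dy + L\<^sup>2 / \<kappa>" .
  moreover have "\<bar>2 * \<mu> * inner dx dy\<bar> \<le> (inner dx dx + inner dy dy) / 2"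
  proof -
    have "\<bar>2 * \<mu> * inner dx dy\<bar> = \<bar>\<mu>\<bar> * (2 * \<bar>inner dx dy\<bar>)"
      by (simp add: abs_mult)
    also have "\<dots> \<le> 1/2 * (inner dx dx + inner dy dy)"
      using assms(3) abs_inner_le_half_sum[of dx dy] by (intro mult_mono) auto
    finally show ?thesis
      by simp
  qed
  then have "- (2 * \<mu> * inner dx dy) \<le> (inner dx dx + inner dy dy) / 2"
    by linarith
  moreover have "L\<^sup>2 / \<kappa> \<ge> 0"
    using \<open>\<kappa> > 0\<close> by simp
  ultimately show ?thesis
    unfolding dx_def dy_def add_divide_distrib by linarith
qed

lemma proj_C_set_unique:
  fixes x y :: "'a::real_inner"
  assumes "\<alpha> \<noteq> 0" "\<beta> \<noteq> 0" and near: "\<bar>inner x y - \<alpha> * g\<bar> \<le> \<alpha>\<^sup>2 / (2 * \<beta>\<^sup>2)"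
  shows "\<exists>!w. w \<in> proj (ip_beta \<beta>) (C_set \<alpha>) (x, y, g)"
proof -
  obtain \<mu> a b where \<mu>: "\<bar>\<mu>\<bar> \<le> 1/2" and x: "x = a + \<mu> *\<^sub>R b" and y: "y = b + \<mu> *\<^sub>R a"
    and ab: "inner a b = \<alpha> * g + \<mu> * (\<alpha>\<^sup>2 / \<beta>\<^sup>2)"
    using exists_twisted_decomposition[of x y "\<alpha> * g" "\<alpha>\<^sup>2 / \<beta>\<^sup>2"] near by auto
  define z where "z = (x, y, g)"
  define w\<^sub>0 where "w\<^sub>0 = (a, b, inner a b / \<alpha>)"
  have w\<^sub>0: "w\<^sub>0 \<in> C_set \<alpha>"
    using assms(1) by (simp add: w\<^sub>0_def)
  have growth: "ip_beta \<beta> (w\<^sub>0 - z) (w\<^sub>0 - z)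
        + (inner (x' - a) (x' - a) + inner (y' - b) (y' - b)) / 2
      \<le> ip_beta \<beta> ((x', y', g') - z) ((x', y', g') - z)" if "inner x' y' = \<alpha> * g'" for x' y' g'
    using C_set_quadratic_growth[OF assms(1,2) \<mu> x y ab] that by (simp add: w\<^sub>0_def z_def)
  show ?thesis
    unfolding z_def[symmetric]
  proof (rule ex1I[of _ w\<^sub>0])
    show "w\<^sub>0 \<in> proj (ip_beta \<beta>) (C_set \<alpha>) z"
      unfolding mem_proj_iff
    proof (intro conjI w\<^sub>0 ballI)
      fix w' :: "'a \<times> 'a \<times> real"
      assume "w' \<in> C_set \<alpha>"
      then obtain x' y' g' where w': "w' = (x', y', g')" and C: "inner x' y' = \<alpha> * g'"
        by (cases w') auto
      show "ip_beta \<beta> (w\<^sub>0 - z) (w\<^sub>0 - z) \<le> ip_beta \<beta> (w' - z) (w' - z)"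
        using growth[OF C] inner_ge_zero[of "x' - a"] inner_ge_zero[of "y' - b"]
        unfolding add_divide_distrib w' by linarith
    qed
  next
    fix w :: "'a \<times> 'a \<times> real"
    assume "w \<in> proj (ip_beta \<beta>) (C_set \<alpha>) z"
    moreover obtain x' y' g' where w: "w = (x', y', g')"
      by (cases w)
    ultimately have C: "inner x' y' = \<alpha> * g'"
      and "ip_beta \<beta> ((x', y', g') - z) ((x', y', g') - z) \<le> ip_beta \<beta> (w\<^sub>0 - z) (w\<^sub>0 - z)"
      using w\<^sub>0 by (auto simp: mem_proj_iff)
    with growth[OF C] have "inner (x' - a) (x' - a) + inner (y' - b) (y' - b) \<le> 0"
      unfolding add_divide_distrib by linarith
    then have "x' = a" "y' = b"
      by (smt (verit) inner_eq_zero_iff inner_ge_zero right_minus_eq)+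
    with C assms(1) show "w = w\<^sub>0"
      by (simp add: w w\<^sub>0_def)
  qed
qed

lemma C_set_residual_small_near:
  fixes x\<^sub>0 y\<^sub>0 :: "'a::real_inner"
  assumes "\<beta> > 0" "(x\<^sub>0, y\<^sub>0, g\<^sub>0) \<in> C_set \<alpha>" "\<epsilon> > 0"
  shows "\<exists>\<delta>>0. \<forall>x y g. ipnorm (ip_beta \<beta>) ((x, y, g) - (x\<^sub>0, y\<^sub>0, g\<^sub>0)) < \<delta> \<longrightarrow>
    \<bar>inner x y - \<alpha> * g\<bar> < \<epsilon>"
proof -
  define F :: "'a \<times> 'a \<times> real \<Rightarrow> real"
    where "F w = inner (fst w) (fst (snd w)) - \<alpha> / \<beta> * snd (snd w)" for w
  have "continuous (at (x\<^sub>0, y\<^sub>0, \<beta> * g\<^sub>0)) F"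
    unfolding F_def by (intro continuous_intros)
  then obtain \<delta> where "\<delta> > 0"
    and \<delta>: "\<forall>w. dist w (x\<^sub>0, y\<^sub>0, \<beta> * g\<^sub>0) < \<delta> \<longrightarrow> dist (F w) (F (x\<^sub>0, y\<^sub>0, \<beta> * g\<^sub>0)) < \<epsilon>"
    using assms(3) unfolding continuous_at_eps_delta by blast
  have "F (x\<^sub>0, y\<^sub>0, \<beta> * g\<^sub>0) = 0" "F (x, y, \<beta> * g) = inner x y - \<alpha> * g" for x y g
    using assms(1,2) by (simp_all add: F_def)
  moreover have "ipnorm (ip_beta \<beta>) ((x, y, g) - (x\<^sub>0, y\<^sub>0, g\<^sub>0))
      = dist (x, y, \<beta> * g) (x\<^sub>0, y\<^sub>0, \<beta> * g\<^sub>0)" for x y g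
    by (simp add: ipnorm_ip_beta dist_norm right_diff_distrib)
  ultimately show ?thesis
    using \<open>\<delta> > 0\<close> \<delta> by (metis dist_real_def diff_zero)
qed

lemma proj_C_set_locally_unique:
  assumes "\<alpha> \<noteq> 0" "\<beta> > 0" "w \<in> C_set \<alpha>"
  shows "\<exists>\<delta>>0. \<forall>z. ipnorm (ip_beta \<beta>) (z - w) < \<delta> \<longrightarrow>
    (\<exists>!w'. w' \<in> proj (ip_beta \<beta>) (C_set \<alpha>) z)"
proof -
  obtain x\<^sub>0 y\<^sub>0 g\<^sub>0 where w: "w = (x\<^sub>0, y\<^sub>0, g\<^sub>0)"
    by (cases w)
  have "\<alpha>\<^sup>2 / (2 * \<beta>\<^sup>2) > 0"
    using assms(1,2) by simp
  then obtain \<delta> where "\<delta> > 0" and \<delta>: "\<forall>x y g. ipnorm (ip_beta \<beta>) ((x, y, g) - w) < \<delta> \<longrightarrow>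
      \<bar>inner x y - \<alpha> * g\<bar> < \<alpha>\<^sup>2 / (2 * \<beta>\<^sup>2)"
    using C_set_residual_small_near[OF assms(2) assms(3)[unfolded w]] w by blast
  have "\<exists>!w'. w' \<in> proj (ip_beta \<beta>) (C_set \<alpha>) (x, y, g)"
    if "ipnorm (ip_beta \<beta>) ((x, y, g) - w) < \<delta>" for x y g
  proof (rule proj_C_set_unique[OF assms(1)])
    show "\<beta> \<noteq> 0"
      using assms(2) by simp
    show "\<bar>inner x y - \<alpha> * g\<bar> \<le> \<alpha>\<^sup>2 / (2 * \<beta>\<^sup>2)"
      using \<delta> that by (simp add: less_imp_le)
  qed
  with \<open>\<delta> > 0\<close> show ?thesis
    by (metis prod_cases3)
qed

theorem mainTheorem4:
  fixes \<alpha> \<beta> :: real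
  assumes "\<alpha> \<noteq> 0" and "\<beta> > 0"
  shows "closed (C_set \<alpha> :: ('a::{real_inner, complete_space} \<times> 'a \<times> real) set)
    \<and> ((\<nexists>B :: 'a set. finite B \<and> span B = UNIV) \<longrightarrow>
         \<not> closedin weak_top (C_set \<alpha> :: ('a \<times> 'a \<times> real) set)
         \<and> weak_top closure_of (C_set \<alpha> :: ('a \<times> 'a \<times> real) set) = UNIV)
    \<and> prox_regular (ip_beta \<beta>) (C_set \<alpha> :: ('a \<times> 'a \<times> real) set)
    \<and> (\<forall>a \<in> (C_set \<alpha> :: ('a \<times> 'a \<times> real) set). \<exists>\<delta>>0. \<forall>z.
         ipnorm (ip_beta \<beta>) (z - a) < \<delta> \<longrightarrow> (\<exists>!w. w \<in> proj (ip_beta \<beta>) (C_set \<alpha>) z))"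
proof -
  have "(\<nexists>B :: 'a set. finite B \<and> span B = UNIV) \<longrightarrow>
      \<not> closedin weak_top (C_set \<alpha> :: ('a \<times> 'a \<times> real) set)
      \<and> weak_top closure_of (C_set \<alpha> :: ('a \<times> 'a \<times> real) set) = UNIV"
    using not_closedin_weak_C_set[OF assms(1)] weak_closure_of_C_set by blast
  then show ?thesis
    using closed_C_set prox_regular_C_set[OF assms] proj_C_set_locally_unique[OF assms] by blast
qed

end
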